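(* Let $k$ be a positive integer and let $p(k)$ be the smallest prime strictly larger than $k$. Suppose $p(k)=k+3$ and $p(k)\equiv 11 \pmod{12}$. Then $\omega(\mathcal F_{\leqslant k})=\chi(\mathcal F_{\leqslant k})=1+p(k)$.
   Context: The vertex set $V$ consists of all reduced fractions $p/q$ with $p,q\in\mathbb Z$, $\gcd(p,q)=1$, together with $1/0$; here $p/q$ and $(-p)/(-q)$ denote the same vertex. For vertices define $d(p/q,a/b)=|pb-qa|$ (which is $\ge1$ for distinct vertices). The graph $\mathcal F_{\leqslant k}$ has vertex set $V$, with an edge between distinct vertices $p/q$ and $a/b$ exactly when $d(p/q,a/b)\le k$. $\omega$ and $\chi$ denote clique number and chromatic number. *)

theory Defs
  imports Main "HOL-Computational_Algebra.Primes" "HOL-Library.Extended_Nat"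
begin

text \<open>Vertices: reduced fractions p/q, represented canonically by the pair (p,q) with
gcd p q = 1 and either q > 0, or q = 0 and p = 1 (the vertex 1/0). This picks exactly
one representative of each class {p/q, (-p)/(-q)}.\<close>

definition farey_vertices :: "(int \<times> int) set" where
  "farey_vertices = {(p, q). coprime p q \<and> (q > 0 \<or> (q = 0 \<and> p = 1))}"

definition fdist :: "int \<times> int \<Rightarrow> int \<times> int \<Rightarrow> int" where
  "fdist x y = \<bar>fst x * snd y - snd x * fst y\<bar>"

definition F_adj :: "nat \<Rightarrow> int \<times> int \<Rightarrow> int \<times> int \<Rightarrow> bool" where
  "F_adj k x y \<longleftrightarrow> x \<in> farey_vertices \<and> y \<in> farey_vertices \<and> x \<noteq> y \<and> fdist x y \<le> int k"

definition F_clique :: "nat \<Rightarrow> (int \<times> int) set \<Rightarrow> bool" where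
  "F_clique k S \<longleftrightarrow> S \<subseteq> farey_vertices \<and> (\<forall>x\<in>S. \<forall>y\<in>S. x \<noteq> y \<longrightarrow> F_adj k x y)"

text \<open>Clique number (in enat, so that an unbounded clique size gives infinity).\<close>
definition F_clique_number :: "nat \<Rightarrow> enat" where
  "F_clique_number k = Sup {enat (card S) | S. finite S \<and> F_clique k S}"

definition F_colourable :: "nat \<Rightarrow> nat \<Rightarrow> bool" where
  "F_colourable k n \<longleftrightarrow> (\<exists>c :: int \<times> int \<Rightarrow> nat.
      (\<forall>x\<in>farey_vertices. c x < n) \<and>
      (\<forall>x y. F_adj k x y \<longrightarrow> c x \<noteq> c y))"

text \<open>Chromatic number (infinity if no finite colouring exists).\<close>
definition F_chromatic_number :: "nat \<Rightarrow> enat" where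
  "F_chromatic_number k = Inf {enat n | n. F_colourable k n}"

definition next_prime :: "nat \<Rightarrow> nat" where
  "next_prime k = (LEAST p. prime p \<and> k < p)"

end

theory Submission
  imports Defs "HOL-Number_Theory.Modular_Inverse"
begin

text \<open>For a prime \<open>P > k\<close>, sending \<open>a/b\<close> to the point \<open>(a : b)\<close> of the projective line over
\<open>\<int>/P\<close> is a proper colouring of \<open>\<F>\<^sub>\<le>\<^sub>k\<close> with \<open>P + 1\<close> colours: equal colours force \<open>P\<close> to divide
the determinant \<open>ad - bc\<close>, which for distinct adjacent vertices is nonzero of absolute value
at most \<open>k < P\<close>. The hypotheses force \<open>k = 12M + 8\<close> and \<open>P = k + 3\<close>, and then \<open>1/0\<close>, the
integers in \<open>[0, 7M + 5]\<close>, the half-integers in \<open>[2M + 3/2, 5M + 7/2]\<close> and the non-integral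
thirds in \<open>[3M + 7/3, 4M + 8/3]\<close> are pairwise at distance at most \<open>12M + 8\<close>: a clique of
\<open>12M + 12 = P + 1\<close> vertices. A clique and a colouring of the same size fix both
\<open>\<omega>\<close> and \<open>\<chi>\<close>.\<close>

lemma fdist_pos:
  assumes "x \<in> farey_vertices" "y \<in> farey_vertices" "x \<noteq> y"
  shows "0 < fdist x y"
proof -
  obtain a b c d where xy: "x = (a, b)" "y = (c, d)" by force
  have ab: "coprime a b" "b > 0 \<or> b = 0 \<and> a = 1" and cd: "coprime c d" "d > 0 \<or> d = 0 \<and> c = 1"
    using assms(1,2) xy by (auto simp: farey_vertices_def)
  have "a * d \<noteq> b * c"
  proof
    assume eq: "a * d = b * c"
    consider "b > 0" "d > 0" | "b = 0" "a = 1" | "d = 0" "c = 1"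
      using ab(2) cd(2) by blast
    then show False
    proof cases
      case 1
      then have "a = c \<and> b = d"
        using coprime_crossproduct'[OF _ _ ab(1) cd(1)] eq by simp
      with assms(3) xy show False by simp
    next
      case 2
      with eq have "d = 0" by simp
      with cd(2) have "c = 1" by simp
      with 2 \<open>d = 0\<close> assms(3) xy show False by simp
    next
      case 3
      with eq ab(2) assms(3) xy show False by auto
    qed
  qed
  then show ?thesis using xy by (simp add: fdist_def)
qed

definition farey_colour :: "int \<Rightarrow> int \<times> int \<Rightarrow> nat" where
  "farey_colour P x =
     (if P dvd snd x then nat P else nat (fst x * modular_inverse P (snd x) mod P))"

lemma farey_colour_less:
  assumes "0 < P"
  shows "farey_colour P x < nat P + 1"
proof -
  have "nat (t mod P) < nat P" for t
    using pos_mod_bound[OF assms] pos_mod_sign[OF assms] assms by (simp add: nat_less_eq_zless)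
  then show ?thesis by (simp add: farey_colour_def less_SucI)
qed

lemma prime_dvd_det_if_farey_colour_eq:
  fixes P a b c d :: int
  assumes "prime P" and eq: "farey_colour P (a, b) = farey_colour P (c, d)"
  shows "P dvd a * d - b * c"
proof -
  have "0 < P" using \<open>prime P\<close> by (rule prime_gt_0_int)
  then have residue_ne: "nat (t mod P) \<noteq> nat P" for t
    using pos_mod_bound[of P t] by linarith
  show ?thesis
  proof (cases "P dvd b")
    case True
    then have "P dvd d" using eq residue_ne by (auto simp: farey_colour_def split: if_splits)
    with True show ?thesis by simp
  next
    case False
    then have "\<not> P dvd d" using eq residue_ne by (auto simp: farey_colour_def split: if_splits)
    define u v where "u = modular_inverse P b" and "v = modular_inverse P d"
    have bu: "[b * u = 1] (mod P)" and dv: "[d * v = 1] (mod P)"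
      using False \<open>\<not> P dvd d\<close> \<open>prime P\<close> unfolding u_def v_def
      by (auto intro!: cong_modular_inverse1 simp: coprime_commute prime_imp_coprime)
    have "nat (a * u mod P) = nat (c * v mod P)"
      using eq False \<open>\<not> P dvd d\<close> by (simp add: farey_colour_def u_def v_def)
    then have auv: "[a * u = c * v] (mod P)"
      using \<open>0 < P\<close> by (simp add: cong_def nat_eq_iff2)
    have "[a * d = a * d * (b * u)] (mod P)"
      using cong_scalar_left[OF bu, of "a * d"] by (simp add: cong_sym)
    also have "a * d * (b * u) = (a * u) * (b * d)" by (simp add: algebra_simps)
    also have "[\<dots> = (c * v) * (b * d)] (mod P)" using auv by (rule cong_scalar_right)
    also have "(c * v) * (b * d) = b * c * (d * v)" by (simp add: algebra_simps)
    also have "[\<dots> = b * c] (mod P)" using cong_scalar_left[OF dv, of "b * c"] by simp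
    finally show ?thesis by (simp add: cong_iff_dvd_diff)
  qed
qed

lemma fdist_ge_if_farey_colour_eq:
  assumes "prime P" "x \<in> farey_vertices" "y \<in> farey_vertices" "x \<noteq> y"
    and "farey_colour P x = farey_colour P y"
  shows "P \<le> fdist x y"
proof -
  obtain a b c d where xy: "x = (a, b)" "y = (c, d)" by force
  have "P dvd a * d - b * c"
    using prime_dvd_det_if_farey_colour_eq assms(1,5) xy by simp
  have "a * d - b * c \<noteq> 0"
    using fdist_pos[OF assms(2-4)] xy by (simp add: fdist_def)
  then have "\<bar>P\<bar> \<le> \<bar>a * d - b * c\<bar>"
    using \<open>P dvd a * d - b * c\<close> by (rule dvd_imp_le_int)
  then show ?thesis
    using prime_gt_0_int[OF assms(1)] xy by (simp add: fdist_def)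
qed

lemma F_colourable_prime:
  assumes "prime P" "k < P"
  shows "F_colourable k (P + 1)"
  unfolding F_colourable_def
proof (intro exI[of _ "farey_colour (int P)"] conjI ballI allI impI)
  fix x
  show "farey_colour (int P) x < P + 1"
    using farey_colour_less[of "int P" x] prime_gt_0_nat[OF assms(1)] by simp
next
  fix x y
  assume "F_adj k x y"
  then have "x \<in> farey_vertices" "y \<in> farey_vertices" "x \<noteq> y" "fdist x y < int P"
    using assms(2) unfolding F_adj_def by auto
  then show "farey_colour (int P) x \<noteq> farey_colour (int P) y"
    using fdist_ge_if_farey_colour_eq[of "int P" x y] assms(1) by auto
qed

lemma card_le_if_F_clique_F_colourable:
  assumes "finite S" "F_clique k S" "F_colourable k n"
  shows "card S \<le> n"
proof -
  obtain c where c: "\<forall>x\<in>farey_vertices. c x < n" "\<forall>x y. F_adj k x y \<longrightarrow> c x \<noteq> c y"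
    using assms(3) unfolding F_colourable_def by blast
  have "inj_on c S" using assms(2) c(2) unfolding F_clique_def inj_on_def by blast
  moreover have "c ` S \<subseteq> {..<n}" using assms(2) c(1) unfolding F_clique_def by auto
  ultimately show ?thesis by (metis card_image card_lessThan card_mono finite_lessThan)
qed

lemma F_clique_number_eqI:
  assumes "finite S" "F_clique k S" "F_colourable k (card S)"
  shows "F_clique_number k = enat (card S)"
  unfolding F_clique_number_def
proof (rule antisym)
  show "Sup {enat (card T) |T. finite T \<and> F_clique k T} \<le> enat (card S)"
    using card_le_if_F_clique_F_colourable[OF _ _ assms(3)] by (auto intro!: Sup_least)
  show "enat (card S) \<le> Sup {enat (card T) |T. finite T \<and> F_clique k T}"
    using assms(1,2) by (auto intro!: Sup_upper)
qed

lemma F_chromatic_number_eqI: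
  assumes "finite S" "F_clique k S" "F_colourable k (card S)"
  shows "F_chromatic_number k = enat (card S)"
  unfolding F_chromatic_number_def
proof (rule antisym)
  show "Inf {enat n |n. F_colourable k n} \<le> enat (card S)"
    using assms(3) by (auto intro!: Inf_lower)
  show "enat (card S) \<le> Inf {enat n |n. F_colourable k n}"
    using card_le_if_F_clique_F_colourable[OF assms(1,2)] by (auto intro!: Inf_greatest)
qed

definition farey_clique :: "int \<Rightarrow> (int \<times> int) set" where
  "farey_clique M = {(1, 0)} \<union> (\<lambda>n. (n, 1)) ` {0..7*M+5}
     \<union> (\<lambda>j. (2*j+1, 2)) ` {2*M+1..5*M+3}
     \<union> (\<lambda>j. (3*j+1, 3)) ` {3*M+2..4*M+2} \<union> (\<lambda>j. (3*j+2, 3)) ` {3*M+2..4*M+2}"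

lemma coprime_mult_add_left: "coprime (m * k + n) m \<longleftrightarrow> coprime n (m :: int)"
  by (metis coprime_iff_gcd_eq_1 gcd.commute gcd_add_mult mult.commute)

lemma farey_clique_subset: "farey_clique M \<subseteq> farey_vertices"
  unfolding farey_clique_def farey_vertices_def
  by (auto simp: coprime_mult_add_left)

lemma fdist_farey_clique_le:
  assumes "0 \<le> M" "x \<in> farey_clique M" "y \<in> farey_clique M"
  shows "fdist x y \<le> 12 * M + 8"
  using assms unfolding farey_clique_def fdist_def by (auto simp: abs_if)

lemma F_clique_farey_clique:
  assumes "0 \<le> M" "12 * M + 8 \<le> int k"
  shows "F_clique k (farey_clique M)"
  using farey_clique_subset fdist_farey_clique_le[OF assms(1)] assms(2)
  unfolding F_clique_def F_adj_def by fastforce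

lemma finite_farey_clique: "finite (farey_clique M)"
  by (simp add: farey_clique_def)

lemma card_farey_clique:
  assumes "0 \<le> M"
  shows "card (farey_clique M) = nat (12 * M + 12)"
proof -
  let ?B = "(\<lambda>n. (n, 1::int)) ` {0..7*M+5}"
  let ?C = "(\<lambda>j. (2*j+1, 2::int)) ` {2*M+1..5*M+3}"
  let ?D = "(\<lambda>j. (3*j+1, 3::int)) ` {3*M+2..4*M+2}"
  let ?E = "(\<lambda>j. (3*j+2, 3::int)) ` {3*M+2..4*M+2}"
  have "card ?B = nat (7*M+6)" "card ?C = nat (3*M+3)" "card ?D = nat (M+1)" "card ?E = nat (M+1)"
    by (subst card_image; auto simp: inj_on_def)+
  moreover have "(1, 0) \<notin> ?B \<union> (?C \<union> (?D \<union> ?E))" "?B \<inter> (?C \<union> (?D \<union> ?E)) = {}"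
    "?C \<inter> (?D \<union> ?E) = {}" "?D \<inter> ?E = {}"
    by auto presburger
  moreover have "farey_clique M = {(1, 0)} \<union> (?B \<union> (?C \<union> (?D \<union> ?E)))"
    unfolding farey_clique_def by (simp add: Un_assoc)
  ultimately have "card (farey_clique M) = 1 + (nat (7*M+6) + (nat (3*M+3) + (nat (M+1) + nat (M+1))))"
    by (simp add: card_Un_disjoint del: Un_iff)
  then show ?thesis using assms by (simp add: nat_add_distrib[symmetric])
qed

lemma prime_next_prime: "prime (next_prime k)"
  and less_next_prime: "k < next_prime k"
  using LeastI_ex[OF bigger_prime[of k]] by (simp_all add: next_prime_def)

theorem theorem1p3:
  fixes k :: nat
  assumes "0 < k"
    and "next_prime k = k + 3"
    and "next_prime k mod 12 = 11"
  shows "F_clique_number k = enat (1 + next_prime k)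
       \<and> F_chromatic_number k = enat (1 + next_prime k)"
proof -
  define M where "M = int (k div 12)"
  have "int k = 12 * M + 8" "0 \<le> M"
    using assms(2,3) unfolding M_def by presburger+
  then have clique: "F_clique k (farey_clique M)"
    and card: "card (farey_clique M) = 1 + next_prime k"
    using F_clique_farey_clique card_farey_clique assms(2) by auto
  have "F_colourable k (card (farey_clique M))"
    unfolding card using F_colourable_prime[OF prime_next_prime less_next_prime] by simp
  then show ?thesis
    using F_clique_number_eqI F_chromatic_number_eqI finite_farey_clique clique card by metis
qed

end
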